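(* The following hold. (1) For any $t$ with $\mathcal{D}_t\ne\emptyset$, $s\mapsto E[e^{tY-sX}]$ is strictly convex on $\mathcal{D}_t$. Furthermore, for $t_1,t_2\in\mathbb{R}$ and $\lambda\in(0,1)$, $(1-\lambda)\mathcal{D}_{t_1}+\lambda\mathcal{D}_{t_2}\subset\mathcal{D}_{(1-\lambda)t_1+\lambda t_2}$. (2) For any $t\in\mathbb{R}$, $\mathcal{D}_t$ is a closed interval and $h(t)>-\infty$; if $h(t)<\infty$ then $h(t)\in\mathcal{D}_t$. (3) $h$ is convex on $\mathcal{A}=\{t\in\mathbb{R}:h(t)<\infty\}$ and $h(0)=0$. (4) $\mathcal{A}$ is an interval with $0\in\mathcal{A}$; moreover, if $\mathcal{D}_t^\circ\ne\emptyset$ for some $t\in\mathcal{A}$, then $\mathcal{D}_s^\circ\ne\emptyset$ for all $s\in\mathcal{A}^\circ$.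
   Context: $(X_n,Y_n)_{n\ge1}$ are i.i.d. copies of $(X,Y)\in\mathbb{R}^2$, where $X$ and $Y$ are nondegenerate and $\Pr\{\sup_{n\ge1}\sum_{i=1}^nX_i=\infty\}=1$. $\mathcal{D}_t=\{s\in\mathbb{R}:E[e^{tY-sX}]\le1\}$ and $h(t)=\inf\mathcal{D}_t$ with $\inf\emptyset=\infty$. $A^\circ$ denotes the interior of $A$; Minkowski combinations of sets are meant. *)

theory Defs
  imports "HOL-Probability.Probability"
begin

definition mgfXY :: "'a measure \<Rightarrow> ('a \<Rightarrow> real) \<Rightarrow> ('a \<Rightarrow> real) \<Rightarrow> real \<Rightarrow> real \<Rightarrow> ennreal" where
  "mgfXY M X Y t s = (\<integral>\<^sup>+ \<omega>. ennreal (exp (t * Y \<omega> - s * X \<omega>)) \<partial>M)"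

definition Dset :: "'a measure \<Rightarrow> ('a \<Rightarrow> real) \<Rightarrow> ('a \<Rightarrow> real) \<Rightarrow> real \<Rightarrow> real set" where
  "Dset M X Y t = {s. mgfXY M X Y t s \<le> 1}"

text \<open>h(t) = inf D_t, with inf of the empty set = +infinity (extended reals).\<close>
definition hfun :: "'a measure \<Rightarrow> ('a \<Rightarrow> real) \<Rightarrow> ('a \<Rightarrow> real) \<Rightarrow> real \<Rightarrow> ereal" where
  "hfun M X Y t = Inf (ereal ` Dset M X Y t)"

definition strictly_convex_on :: "real set \<Rightarrow> (real \<Rightarrow> real) \<Rightarrow> bool" where
  "strictly_convex_on S f \<longleftrightarrow>
     (\<forall>x\<in>S. \<forall>y\<in>S. \<forall>u. x \<noteq> y \<and> 0 < u \<and> u < 1 \<longrightarrow>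
        f ((1 - u) * x + u * y) < (1 - u) * f x + u * f y)"

end

theory Submission
  imports Defs
begin

text \<open>
  Pointwise convexity of exp makes (t, s) \<mapsto> E[exp (tY - sX)] jointly convex, so the graph
  {(t, s). s \<in> D t} is a convex subset of the plane, and strictly convex in s because X is not
  a.s. zero. By Fatou each D t is closed, and it is bounded below because X > 0 with positive
  probability (otherwise the walk could not be unbounded above). Convexity of h and of A, and the
  propagation of nonempty interiors, are then statements about an arbitrary family of closed sets
  with convex graph. The remaining claim h 0 = 0 is the only place where the random walk enters
  essentially: if some s < 0 lay in D 0, strict convexity would give c > 0 with E[exp (cX)] < 1,
  and Chernoff bounds for the partial sums, summed over n, would give
  P(sup_n S_n \<ge> a) < 1 for a suitable level a.
\<close>

section \<open>Strict convexity of the exponential\<close>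


lemma exp_gt_add_one:
  fixes x :: real
  assumes "x \<noteq> 0"
  shows "1 + x < exp x"
proof (cases "1 + x/2 < 0")
  case True
  then show ?thesis using exp_gt_zero[of x] by linarith
next
  case False
  have "1 + x + x^2/4 = (1 + x/2)^2" by (simp add: power2_eq_square algebra_simps)
  also have "\<dots> \<le> exp (x/2) ^ 2"
    using False by (intro power_mono) auto
  also have "\<dots> = exp x" by (simp flip: exp_of_nat_mult)
  finally have "1 + x + x^2/4 \<le> exp x" .
  moreover have "0 < x^2/4" using assms by simp
  ultimately show ?thesis by linarith
qed

lemma strictly_convex_on_exp: "strictly_convex_on UNIV exp"
  unfolding strictly_convex_on_def
proof (intro ballI allI impI)
  fix a b u :: real
  assume "a \<noteq> b \<and> 0 < u \<and> u < 1"
  then have ab: "a \<noteq> b" and u: "0 < u" "u < 1" by auto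
  define z where "z = (1 - u) * a + u * b"
  have "a - z = u * (a - b)" "b - z = (1 - u) * (b - a)"
    unfolding z_def by (simp_all add: algebra_simps)
  then have "a \<noteq> z" "b \<noteq> z" using ab u by auto
  have tangent: "exp z * (1 + (c - z)) < exp c" if "c \<noteq> z" for c
  proof -
    have "exp z * (1 + (c - z)) < exp z * exp (c - z)"
      using exp_gt_add_one[of "c - z"] that by simp
    then show ?thesis by (simp flip: exp_add)
  qed
  have "exp z * (1 + (a - z)) < exp a" "exp z * (1 + (b - z)) < exp b"
    using tangent \<open>a \<noteq> z\<close> \<open>b \<noteq> z\<close> by auto
  then have "(1 - u) * (exp z * (1 + (a - z))) + u * (exp z * (1 + (b - z)))
      < (1 - u) * exp a + u * exp b"
    using u by (intro add_strict_mono mult_strict_left_mono) auto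
  moreover have "(1 - u) * (exp z * (1 + (a - z))) + u * (exp z * (1 + (b - z))) = exp z"
    unfolding z_def by (simp add: algebra_simps)
  ultimately show "exp ((1 - u) * a + u * b) < (1 - u) * exp a + u * exp b"
    unfolding z_def by simp
qed

section \<open>Families of sets with convex graph\<close>

definition convex_graph :: "(real \<Rightarrow> real set) \<Rightarrow> bool" where
  "convex_graph D \<longleftrightarrow>
     (\<forall>t1 t2 a b u. a \<in> D t1 \<longrightarrow> b \<in> D t2 \<longrightarrow> 0 \<le> u \<longrightarrow> u \<le> 1 \<longrightarrow>
        (1 - u) * a + u * b \<in> D ((1 - u) * t1 + u * t2))"

lemma convex_graphD:
  "convex_graph D \<Longrightarrow> a \<in> D t1 \<Longrightarrow> b \<in> D t2 \<Longrightarrow> 0 \<le> u \<Longrightarrow> u \<le> 1 \<Longrightarrow>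
    (1 - u) * a + u * b \<in> D ((1 - u) * t1 + u * t2)"
  unfolding convex_graph_def by blast

lemma convex_graph_section:
  assumes "convex_graph D"
  shows "convex (D t)"
proof (rule convexI)
  fix a b u v :: real
  assume "a \<in> D t" "b \<in> D t" "0 \<le> u" "0 \<le> v" "u + v = 1"
  then have "(1 - v) * a + v * b \<in> D ((1 - v) * t + v * t)"
    by (intro convex_graphD[OF assms]) auto
  then have "(1 - v) * a + v * b \<in> D t" by (simp add: algebra_simps)
  moreover have "u = 1 - v" using \<open>u + v = 1\<close> by simp
  ultimately show "u *\<^sub>R a + v *\<^sub>R b \<in> D t" by simp
qed

lemma convex_graph_domain:
  assumes "convex_graph D"
  shows "convex {t. D t \<noteq> {}}"
proof (rule convexI)
  fix t1 t2 u v :: real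
  assume "t1 \<in> {t. D t \<noteq> {}}" "t2 \<in> {t. D t \<noteq> {}}" "0 \<le> u" "0 \<le> v" "u + v = 1"
  then obtain a b where "a \<in> D t1" "b \<in> D t2" "0 \<le> v" "v \<le> 1" "u = 1 - v" by auto
  then have "(1 - v) * a + v * b \<in> D ((1 - v) * t1 + v * t2)"
    by (intro convex_graphD[OF assms])
  then show "u *\<^sub>R t1 + v *\<^sub>R t2 \<in> {t. D t \<noteq> {}}"
    using \<open>u = 1 - v\<close> by auto
qed

lemma convex_graph_Inf:
  assumes "convex_graph D" and bdd: "\<And>t. bdd_below (D t)" and closed: "\<And>t. closed (D t)"
    and f: "\<And>t. D t \<noteq> {} \<Longrightarrow> f t = Inf (D t)"
  shows "convex_on {t. D t \<noteq> {}} f"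
proof (rule convex_onI)
  fix u t1 t2 :: real
  assume "0 < u" "u < 1" "t1 \<in> {t. D t \<noteq> {}}" "t2 \<in> {t. D t \<noteq> {}}"
  then have "D t1 \<noteq> {}" "D t2 \<noteq> {}" "0 \<le> u" "u \<le> 1" by auto
  then have mem: "(1 - u) * f t1 + u * f t2 \<in> D ((1 - u) * t1 + u * t2)"
    using f convex_graphD[OF assms(1) closed_contains_Inf closed_contains_Inf] bdd closed by simp
  then have "f ((1 - u) * t1 + u * t2) = Inf (D ((1 - u) * t1 + u * t2))"
    using f by blast
  also have "\<dots> \<le> (1 - u) * f t1 + u * f t2"
    using mem bdd by (simp add: cInf_lower)
  finally show "f ((1 - u) *\<^sub>R t1 + u *\<^sub>R t2) \<le> (1 - u) * f t1 + u * f t2"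
    by simp
qed (rule convex_graph_domain[OF assms(1)])

lemma convex_graph_interior_segment:
  assumes "convex_graph D" and "interior (D t0) \<noteq> {}" and "D t1 \<noteq> {}"
    and u: "0 \<le> u" "u < 1"
  shows "interior (D ((1 - u) * t0 + u * t1)) \<noteq> {}"
proof -
  obtain x e where e: "0 < e" "ball x e \<subseteq> D t0"
    using assms(2) by (auto simp: mem_interior)
  obtain c where c: "c \<in> D t1" using assms(3) by blast
  \<comment> \<open>The homothety with centre c and ratio 1 - u maps ball x e onto ball p ((1 - u) * e).\<close>
  define p where "p = (1 - u) * x + u * c"
  have "ball p ((1 - u) * e) \<subseteq> D ((1 - u) * t0 + u * t1)"
  proof
    fix w assume "w \<in> ball p ((1 - u) * e)"
    then have "\<bar>w - p\<bar> < (1 - u) * e" by (simp add: dist_real_def abs_minus_commute)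
    define y where "y = (w - u * c) / (1 - u)"
    have "\<bar>y - x\<bar> = \<bar>w - p\<bar> / (1 - u)"
      using u by (simp add: y_def p_def field_simps abs_divide)
    also have "\<dots> < e" using \<open>\<bar>w - p\<bar> < (1 - u) * e\<close> u by (simp add: pos_divide_less_eq mult.commute)
    finally have "y \<in> D t0" using e by (auto simp: dist_real_def abs_minus_commute)
    moreover have "w = (1 - u) * y + u * c" using u by (simp add: y_def field_simps)
    ultimately show "w \<in> D ((1 - u) * t0 + u * t1)"
      using convex_graphD[OF assms(1) _ c] u by simp
  qed
  moreover have "0 < (1 - u) * e" using u e by simp
  ultimately show ?thesis by (metis centre_in_ball empty_iff interior_maximal open_ball subsetD)
qed

lemma convex_graph_interior_nonempty:
  assumes "convex_graph D" and "interior (D t0) \<noteq> {}" and "s \<in> interior {t. D t \<noteq> {}}"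
  shows "interior (D s) \<noteq> {}"
proof -
  obtain d where "0 < d" and d: "ball s d \<subseteq> {t. D t \<noteq> {}}"
    using assms(3) by (auto simp: mem_interior)
  \<comment> \<open>Write s as a proper convex combination of t0 and a point t1 beyond s.\<close>
  define t1 where "t1 = (if t0 \<le> s then s + d/2 else s - d/2)"
  define u where "u = (s - t0) / (t1 - t0)"
  have "D t1 \<noteq> {}" using d \<open>0 < d\<close> by (auto simp: t1_def dist_real_def subset_iff)
  have "t1 \<noteq> t0" "0 \<le> u" "u < 1"
    using \<open>0 < d\<close> by (auto simp: u_def t1_def field_simps)
  have "(1 - u) * t0 + u * t1 = t0 + u * (t1 - t0)" by (simp add: algebra_simps)
  also have "u * (t1 - t0) = s - t0" using \<open>t1 \<noteq> t0\<close> by (simp add: u_def)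
  finally have "(1 - u) * t0 + u * t1 = s" by simp
  then show ?thesis
    using convex_graph_interior_segment[OF assms(1,2) \<open>D t1 \<noteq> {}\<close> \<open>0 \<le> u\<close> \<open>u < 1\<close>] by simp
qed

section \<open>The sublevel sets of the exponential moment\<close>

lemma mgfXY_convex_combination:
  assumes [measurable]: "X \<in> borel_measurable M" "Y \<in> borel_measurable M"
    and u: "0 \<le> u" "u \<le> 1"
  shows "mgfXY M X Y ((1 - u) * t1 + u * t2) ((1 - u) * a + u * b)
    \<le> ennreal (1 - u) * mgfXY M X Y t1 a + ennreal u * mgfXY M X Y t2 b"
proof -
  have "ennreal (exp (((1 - u) * t1 + u * t2) * Y \<omega> - ((1 - u) * a + u * b) * X \<omega>))
      \<le> ennreal (1 - u) * ennreal (exp (t1 * Y \<omega> - a * X \<omega>))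
        + ennreal u * ennreal (exp (t2 * Y \<omega> - b * X \<omega>))" for \<omega>
  proof -
    have "exp (((1 - u) * t1 + u * t2) * Y \<omega> - ((1 - u) * a + u * b) * X \<omega>)
        = exp ((1 - u) * (t1 * Y \<omega> - a * X \<omega>) + u * (t2 * Y \<omega> - b * X \<omega>))"
      by (simp add: algebra_simps)
    also have "\<dots> \<le> (1 - u) * exp (t1 * Y \<omega> - a * X \<omega>) + u * exp (t2 * Y \<omega> - b * X \<omega>)"
      using convex_onD[OF exp_convex, of u] u by simp
    finally have "ennreal (exp (((1 - u) * t1 + u * t2) * Y \<omega> - ((1 - u) * a + u * b) * X \<omega>))
        \<le> ennreal ((1 - u) * exp (t1 * Y \<omega> - a * X \<omega>) + u * exp (t2 * Y \<omega> - b * X \<omega>))"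
      by (rule ennreal_leI)
    then show ?thesis using u by (simp add: ennreal_mult ennreal_plus)
  qed
  then have "mgfXY M X Y ((1 - u) * t1 + u * t2) ((1 - u) * a + u * b)
      \<le> (\<integral>\<^sup>+\<omega>. ennreal (1 - u) * ennreal (exp (t1 * Y \<omega> - a * X \<omega>))
            + ennreal u * ennreal (exp (t2 * Y \<omega> - b * X \<omega>)) \<partial>M)"
    unfolding mgfXY_def by (intro nn_integral_mono)
  also have "\<dots> = ennreal (1 - u) * mgfXY M X Y t1 a + ennreal u * mgfXY M X Y t2 b"
    unfolding mgfXY_def by (simp add: nn_integral_add nn_integral_cmult)
  finally show ?thesis .
qed

lemma convex_graph_Dset:
  assumes "X \<in> borel_measurable M" "Y \<in> borel_measurable M"
  shows "convex_graph (Dset M X Y)"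
  unfolding convex_graph_def
proof (intro allI impI)
  fix t1 t2 a b u :: real
  assume "a \<in> Dset M X Y t1" "b \<in> Dset M X Y t2" and u: "0 \<le> u" "u \<le> 1"
  then have "ennreal (1 - u) * mgfXY M X Y t1 a + ennreal u * mgfXY M X Y t2 b
      \<le> ennreal (1 - u) * 1 + ennreal u * 1"
    by (intro add_mono mult_left_mono) (auto simp: Dset_def)
  also have "\<dots> = 1" using u by (simp flip: ennreal_plus)
  finally have "ennreal (1 - u) * mgfXY M X Y t1 a + ennreal u * mgfXY M X Y t2 b \<le> 1" .
  with mgfXY_convex_combination[OF assms u]
  show "(1 - u) * a + u * b \<in> Dset M X Y ((1 - u) * t1 + u * t2)"
    unfolding Dset_def by (blast intro: order.trans)
qed

lemma closed_Dset:
  assumes [measurable]: "X \<in> borel_measurable M" "Y \<in> borel_measurable M"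
  shows "closed (Dset M X Y t)"
  unfolding closed_sequential_limits
proof safe
  fix s :: "nat \<Rightarrow> real" and l
  assume s: "\<forall>n. s n \<in> Dset M X Y t" and "s \<longlonglongrightarrow> l"
  then have lim: "(\<lambda>n. ennreal (exp (t * Y \<omega> - s n * X \<omega>))) \<longlonglongrightarrow> ennreal (exp (t * Y \<omega> - l * X \<omega>))"
    for \<omega>
    by (intro tendsto_ennrealI tendsto_intros)
  have "mgfXY M X Y t l = (\<integral>\<^sup>+\<omega>. liminf (\<lambda>n. ennreal (exp (t * Y \<omega> - s n * X \<omega>))) \<partial>M)"
    unfolding mgfXY_def
    by (intro nn_integral_cong) (metis lim lim_imp_Liminf trivial_limit_sequentially)
  also have "\<dots> \<le> liminf (\<lambda>n. mgfXY M X Y t (s n))"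
    unfolding mgfXY_def by (rule nn_integral_liminf) measurable
  also have "\<dots> \<le> limsup (\<lambda>n. mgfXY M X Y t (s n))" by (rule Liminf_le_Limsup) simp
  also have "\<dots> \<le> 1"
    using s by (intro Limsup_bounded) (auto simp: Dset_def)
  finally show "l \<in> Dset M X Y t" by (simp add: Dset_def)
qed

lemma hfun_eq_Inf:
  "bdd_below (Dset M X Y t) \<Longrightarrow> Dset M X Y t \<noteq> {} \<Longrightarrow> hfun M X Y t = ereal (Inf (Dset M X Y t))"
  unfolding hfun_def by (simp add: ereal_Inf')

lemma hfun_eq_top: "Dset M X Y t = {} \<Longrightarrow> hfun M X Y t = \<infinity>"
  unfolding hfun_def by (simp add: top_ereal_def)

lemma non_null_set_with_uniform_bounds:
  fixes X Z :: "'a \<Rightarrow> real"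
  assumes [measurable]: "X \<in> borel_measurable M" "Z \<in> borel_measurable M"
    and "emeasure M {\<omega>\<in>space M. 0 < X \<omega>} \<noteq> 0"
  obtains \<delta> K where "0 < \<delta>" "emeasure M {\<omega>\<in>space M. \<delta> < X \<omega> \<and> - K < Z \<omega>} \<noteq> 0"
proof -
  define N where "N n = {\<omega>\<in>space M. 1 / real (Suc n) < X \<omega> \<and> - real n < Z \<omega>}" for n
  have [measurable]: "N n \<in> sets M" for n unfolding N_def by measurable
  have "{\<omega>\<in>space M. 0 < X \<omega>} \<subseteq> (\<Union>n. N n)"
  proof
    fix \<omega> assume "\<omega> \<in> {\<omega>\<in>space M. 0 < X \<omega>}"
    then have \<omega>: "\<omega> \<in> space M" "0 < X \<omega>" by auto
    obtain n1 where n1: "inverse (real (Suc n1)) < X \<omega>" using reals_Archimedean[OF \<omega>(2)] by blast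
    obtain n2 where n2: "- Z \<omega> < real n2" using reals_Archimedean2 by blast
    have "1 / real (Suc (max n1 n2)) \<le> 1 / real (Suc n1)"
      by (intro divide_left_mono) auto
    then have "\<omega> \<in> N (max n1 n2)"
      using n1 n2 \<omega> unfolding N_def by (auto simp: inverse_eq_divide)
    then show "\<omega> \<in> (\<Union>n. N n)" by blast
  qed
  moreover have "{\<omega>\<in>space M. 0 < X \<omega>} \<in> sets M" by measurable
  moreover have "{\<omega>\<in>space M. 0 < X \<omega>} \<notin> null_sets M" using assms(3) by auto
  ultimately have "(\<Union>n. N n) \<notin> null_sets M" using null_sets_subset by blast
  then obtain n where "N n \<notin> null_sets M" using null_sets_UN by blast
  then have "emeasure M (N n) \<noteq> 0" by (auto intro: null_setsI)
  then show ?thesis using that[of "1 / real (Suc n)" "real n"] by (simp add: N_def)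
qed

lemma (in finite_measure) bdd_below_Dset:
  assumes [measurable]: "X \<in> borel_measurable M" "Y \<in> borel_measurable M"
    and "emeasure M {\<omega>\<in>space M. 0 < X \<omega>} \<noteq> 0"
  shows "bdd_below (Dset M X Y t)"
proof -
  obtain \<delta> K where "0 < \<delta>" and S: "emeasure M {\<omega>\<in>space M. \<delta> < X \<omega> \<and> - K < t * Y \<omega>} \<noteq> 0"
    using non_null_set_with_uniform_bounds[of X M "\<lambda>\<omega>. t * Y \<omega>"] assms by auto
  define S where "S = {\<omega>\<in>space M. \<delta> < X \<omega> \<and> - K < t * Y \<omega>}"
  have [measurable]: "S \<in> sets M" unfolding S_def by measurable
  define p where "p = measure M S"
  have "0 < p" using S unfolding p_def S_def by (simp add: emeasure_eq_measure zero_less_measure_iff)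
  have "(ln p - K) / \<delta> \<le> s" if "s \<in> Dset M X Y t" "s \<le> 0" for s
  proof -
    have "ennreal (exp (- K - s * \<delta>) * p) = (\<integral>\<^sup>+\<omega>. ennreal (exp (- K - s * \<delta>)) * indicator S \<omega> \<partial>M)"
      by (simp add: p_def emeasure_eq_measure ennreal_mult nn_integral_cmult_indicator)
    also have "\<dots> \<le> mgfXY M X Y t s"
      unfolding mgfXY_def
    proof (intro nn_integral_mono)
      fix \<omega>
      have "- K - s * \<delta> \<le> t * Y \<omega> - s * X \<omega>" if "\<omega> \<in> S"
        using that \<open>s \<le> 0\<close> mult_left_mono_neg[of \<delta> "X \<omega>" s] by (auto simp: S_def)
      then show "ennreal (exp (- K - s * \<delta>)) * indicator S \<omega> \<le> ennreal (exp (t * Y \<omega> - s * X \<omega>))"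
        by (auto simp: indicator_def ennreal_leI)
    qed
    also have "\<dots> \<le> 1" using that by (simp add: Dset_def)
    finally have "exp (- K - s * \<delta>) * p \<le> 1" by simp
    then have "ln (exp (- K - s * \<delta>) * p) \<le> 0" using \<open>0 < p\<close> by simp
    then have "ln p - K \<le> s * \<delta>" using \<open>0 < p\<close> by (simp add: ln_mult)
    then show ?thesis using \<open>0 < \<delta>\<close> by (simp add: divide_le_eq)
  qed
  then have "min 0 ((ln p - K) / \<delta>) \<le> s" if "s \<in> Dset M X Y t" for s
    using that by (cases "s \<le> 0") (auto simp: min_le_iff_disj)
  then show ?thesis by (rule bdd_belowI)
qed

lemma (in finite_measure) strictly_convex_on_mgfXY:
  assumes [measurable]: "X \<in> borel_measurable M" "Y \<in> borel_measurable M"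
    and "emeasure M {\<omega>\<in>space M. X \<omega> \<noteq> 0} \<noteq> 0"
  shows "strictly_convex_on (Dset M X Y t) (\<lambda>s. enn2real (mgfXY M X Y t s))"
  unfolding strictly_convex_on_def
proof (intro ballI allI impI)
  fix x y u :: real
  assume x: "x \<in> Dset M X Y t" and y: "y \<in> Dset M X Y t" and "x \<noteq> y \<and> 0 < u \<and> u < 1"
  then have "x \<noteq> y" "0 < u" "u < 1" by auto
  define g where "g s \<omega> = exp (t * Y \<omega> - s * X \<omega>)" for s \<omega>
  have integrable: "integrable M (g s)" if "s \<in> Dset M X Y t" for s
  proof (rule integrableI_bounded)
    have "(\<integral>\<^sup>+\<omega>. ennreal (norm (g s \<omega>)) \<partial>M) = mgfXY M X Y t s"
      unfolding mgfXY_def g_def by simp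
    also have "\<dots> < \<infinity>" using that by (simp add: Dset_def order_le_less_trans)
    finally show "(\<integral>\<^sup>+\<omega>. ennreal (norm (g s \<omega>)) \<partial>M) < \<infinity>" .
  qed (unfold g_def, measurable)
  have mgf_eq: "enn2real (mgfXY M X Y t s) = integral\<^sup>L M (g s)" for s
    unfolding mgfXY_def g_def by (rule enn2real_nn_integral_eq_integral) auto
  define z where "z = (1 - u) * x + u * y"
  have z: "z \<in> Dset M X Y t"
    using convexD[OF convex_graph_section[OF convex_graph_Dset[OF assms(1,2)]] x y, of "1 - u" u]
      \<open>0 < u\<close> \<open>u < 1\<close> by (simp add: z_def)
  have g_z: "g z \<omega> = exp ((1 - u) * (t * Y \<omega> - x * X \<omega>) + u * (t * Y \<omega> - y * X \<omega>))" for \<omega>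
    unfolding g_def z_def by (simp add: algebra_simps)
  have "g z \<omega> \<le> (1 - u) * g x \<omega> + u * g y \<omega>" for \<omega>
    using convex_onD[OF exp_convex, of u] \<open>0 < u\<close> \<open>u < 1\<close> unfolding g_z by (simp add: g_def)
  moreover have "g z \<omega> \<noteq> (1 - u) * g x \<omega> + u * g y \<omega>" if "X \<omega> \<noteq> 0" for \<omega>
  proof -
    have "t * Y \<omega> - x * X \<omega> \<noteq> t * Y \<omega> - y * X \<omega>" using that \<open>x \<noteq> y\<close> by simp
    then show ?thesis
      using strictly_convex_on_exp[unfolded strictly_convex_on_def, rule_format,
          of "t * Y \<omega> - x * X \<omega>" "t * Y \<omega> - y * X \<omega>" u] \<open>0 < u\<close> \<open>u < 1\<close>
      unfolding g_z by (simp add: g_def)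
  qed
  ultimately have "integral\<^sup>L M (g z) < integral\<^sup>L M (\<lambda>\<omega>. (1 - u) * g x \<omega> + u * g y \<omega>)"
    using integrable[OF x] integrable[OF y] integrable[OF z] assms(3)
    by (intro integral_less_AE[where A="{\<omega>\<in>space M. X \<omega> \<noteq> 0}"]) auto
  also have "\<dots> = (1 - u) * integral\<^sup>L M (g x) + u * integral\<^sup>L M (g y)"
    using integrable[OF x] integrable[OF y] by simp
  finally show "enn2real (mgfXY M X Y t ((1 - u) * x + u * y))
      < (1 - u) * enn2real (mgfXY M X Y t x) + u * enn2real (mgfXY M X Y t y)"
    unfolding mgf_eq z_def .
qed

lemma emeasure_nonzero_of_nonconstant:
  fixes X :: "'a \<Rightarrow> real"
  assumes "X \<in> borel_measurable M" and "\<not> (\<exists>c. AE \<omega> in M. X \<omega> = c)"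
  shows "emeasure M {\<omega>\<in>space M. X \<omega> \<noteq> 0} \<noteq> 0"
proof
  assume "emeasure M {\<omega>\<in>space M. X \<omega> \<noteq> 0} = 0"
  then have "AE \<omega> in M. X \<omega> = 0"
    using assms(1) by (intro AE_I'[of "{\<omega>\<in>space M. X \<omega> \<noteq> 0}"]) (auto intro: null_setsI)
  with assms(2) show False by blast
qed

section \<open>Random walks that are unbounded above\<close>

lemma nn_integral_fst_eq_of_distr_eq:
  fixes X X' Y Y' :: "'a \<Rightarrow> real" and g :: "real \<Rightarrow> ennreal"
  assumes [measurable]: "X \<in> borel_measurable M" "Y \<in> borel_measurable M"
    "X' \<in> borel_measurable M" "Y' \<in> borel_measurable M" "g \<in> borel_measurable borel"
    and distr: "distr M borel (\<lambda>\<omega>. (X' \<omega>, Y' \<omega>)) = distr M borel (\<lambda>\<omega>. (X \<omega>, Y \<omega>))"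
  shows "(\<integral>\<^sup>+\<omega>. g (X' \<omega>) \<partial>M) = (\<integral>\<^sup>+\<omega>. g (X \<omega>) \<partial>M)"
proof -
  have "(fst :: real \<times> real \<Rightarrow> real) \<in> borel_measurable borel"
    by (intro borel_measurable_continuous_onI continuous_intros)
  then have [measurable]: "(\<lambda>p :: real \<times> real. g (fst p)) \<in> borel_measurable borel"
    using assms(5) by (rule measurable_compose)
  have "(\<integral>\<^sup>+\<omega>. g (X' \<omega>) \<partial>M) = (\<integral>\<^sup>+p. g (fst p) \<partial>distr M borel (\<lambda>\<omega>. (X' \<omega>, Y' \<omega>)))"
    by (simp add: nn_integral_distr)
  also have "\<dots> = (\<integral>\<^sup>+p. g (fst p) \<partial>distr M borel (\<lambda>\<omega>. (X \<omega>, Y \<omega>)))"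
    by (simp only: distr)
  also have "\<dots> = (\<integral>\<^sup>+\<omega>. g (X \<omega>) \<partial>M)"
    by (simp add: nn_integral_distr)
  finally show ?thesis .
qed

context prob_space
begin

lemma emeasure_pos_of_unbounded_partial_sums:
  fixes Xs Ys :: "nat \<Rightarrow> 'a \<Rightarrow> real"
  assumes [measurable]: "X \<in> borel_measurable M" "Y \<in> borel_measurable M"
    and Xs: "\<And>i. i \<ge> 1 \<Longrightarrow> Xs i \<in> borel_measurable M"
    and Ys: "\<And>i. i \<ge> 1 \<Longrightarrow> Ys i \<in> borel_measurable M"
    and distr: "\<And>i. i \<ge> 1 \<Longrightarrow> distr M borel (\<lambda>\<omega>. (Xs i \<omega>, Ys i \<omega>)) = distr M borel (\<lambda>\<omega>. (X \<omega>, Y \<omega>))"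
    and unbounded: "AE \<omega> in M. (SUP n\<in>{1..}. ereal (\<Sum>i=1..n. Xs i \<omega>)) = \<infinity>"
  shows "emeasure M {\<omega>\<in>space M. 0 < X \<omega>} \<noteq> 0"
proof
  have mass: "emeasure M {\<omega>\<in>space M. 0 < Z \<omega>} = (\<integral>\<^sup>+\<omega>. indicator {0<..} (Z \<omega>) \<partial>M)"
    if [measurable]: "Z \<in> borel_measurable M" for Z :: "'a \<Rightarrow> real"
  proof -
    have "emeasure M {\<omega>\<in>space M. 0 < Z \<omega>} = (\<integral>\<^sup>+\<omega>. indicator {\<omega>\<in>space M. 0 < Z \<omega>} \<omega> \<partial>M)"
      by (simp add: nn_integral_indicator)
    also have "\<dots> = (\<integral>\<^sup>+\<omega>. indicator {0<..} (Z \<omega>) \<partial>M)"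
      by (intro nn_integral_cong) (auto simp: indicator_def)
    finally show ?thesis .
  qed
  assume null: "emeasure M {\<omega>\<in>space M. 0 < X \<omega>} = 0"
  have "AE \<omega> in M. Xs i \<omega> \<le> 0" if "i \<ge> 1" for i
  proof (rule AE_I')
    have [measurable]: "Xs i \<in> borel_measurable M" "Ys i \<in> borel_measurable M"
      using that Xs Ys by auto
    have "emeasure M {\<omega>\<in>space M. 0 < Xs i \<omega>} = emeasure M {\<omega>\<in>space M. 0 < X \<omega>}"
      unfolding mass[OF \<open>Xs i \<in> borel_measurable M\<close>] mass[OF \<open>X \<in> borel_measurable M\<close>]
      using distr[OF that] by (intro nn_integral_fst_eq_of_distr_eq) auto
    then show "{\<omega>\<in>space M. 0 < Xs i \<omega>} \<in> null_sets M" using null by (auto intro: null_setsI)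
  qed auto
  then have "AE \<omega> in M. \<forall>i\<ge>1. Xs i \<omega> \<le> 0"
    by (subst AE_all_countable) (auto intro: AE_mp)
  then have "AE \<omega> in M. (SUP n\<in>{1..}. ereal (\<Sum>i=1..n. Xs i \<omega>)) \<le> 0"
    by eventually_elim (auto intro!: SUP_least sum_nonpos)
  with unbounded have "AE \<omega> in M. False" by eventually_elim simp
  then show False by simp
qed

lemma nn_integral_exp_partial_sum:
  fixes Xs Ys :: "nat \<Rightarrow> 'a \<Rightarrow> real"
  assumes [measurable]: "X \<in> borel_measurable M" "Y \<in> borel_measurable M"
    and Xs: "\<And>i. i \<ge> 1 \<Longrightarrow> Xs i \<in> borel_measurable M"
    and Ys: "\<And>i. i \<ge> 1 \<Longrightarrow> Ys i \<in> borel_measurable M"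
    and indep: "indep_vars (\<lambda>_. borel) (\<lambda>i \<omega>. (Xs i \<omega>, Ys i \<omega>)) {1..}"
    and distr: "\<And>i. i \<ge> 1 \<Longrightarrow> distr M borel (\<lambda>\<omega>. (Xs i \<omega>, Ys i \<omega>)) = distr M borel (\<lambda>\<omega>. (X \<omega>, Y \<omega>))"
  shows "(\<integral>\<^sup>+\<omega>. ennreal (exp (c * (\<Sum>i=1..n. Xs i \<omega>))) \<partial>M)
    = (\<integral>\<^sup>+\<omega>. ennreal (exp (c * X \<omega>)) \<partial>M) ^ n"
proof -
  have "(\<integral>\<^sup>+\<omega>. ennreal (exp (c * (\<Sum>i=1..n. Xs i \<omega>))) \<partial>M)
      = (\<integral>\<^sup>+\<omega>. (\<Prod>i\<in>{1..n}. ennreal (exp (c * Xs i \<omega>))) \<partial>M)"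
    by (simp add: sum_distrib_left exp_sum prod_ennreal)
  also have "\<dots> = (\<Prod>i\<in>{1..n}. \<integral>\<^sup>+\<omega>. ennreal (exp (c * Xs i \<omega>)) \<partial>M)"
  proof (rule indep_vars_nn_integral)
    have "indep_vars (\<lambda>_. borel) (\<lambda>i \<omega>. (Xs i \<omega>, Ys i \<omega>)) {1..n}"
      by (rule indep_vars_subset[OF indep]) auto
    then have "indep_vars (\<lambda>_. borel)
        (\<lambda>i \<omega>. (\<lambda>p::real \<times> real. ennreal (exp (c * fst p))) (Xs i \<omega>, Ys i \<omega>)) {1..n}"
      by (rule indep_vars_compose2)
        (intro borel_measurable_continuous_onI continuous_on_ennreal continuous_intros)
    then show "indep_vars (\<lambda>_. borel) (\<lambda>i \<omega>. ennreal (exp (c * Xs i \<omega>))) {1..n}" by simp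
  qed auto
  also have "\<dots> = (\<Prod>i\<in>{1..n}. \<integral>\<^sup>+\<omega>. ennreal (exp (c * X \<omega>)) \<partial>M)"
  proof (rule prod.cong)
    fix i assume "i \<in> {1..n}"
    then show "(\<integral>\<^sup>+\<omega>. ennreal (exp (c * Xs i \<omega>)) \<partial>M) = (\<integral>\<^sup>+\<omega>. ennreal (exp (c * X \<omega>)) \<partial>M)"
      using Xs Ys distr
      by (intro nn_integral_fst_eq_of_distr_eq[where X'="Xs i" and Y'="Ys i"
            and g="\<lambda>x. ennreal (exp (c * x))"]) auto
  qed simp
  finally show ?thesis by simp
qed

lemma one_le_exp_moment_of_unbounded_partial_sums:
  fixes Xs Ys :: "nat \<Rightarrow> 'a \<Rightarrow> real"
  assumes [measurable]: "X \<in> borel_measurable M" "Y \<in> borel_measurable M"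
    and Xs: "\<And>i. i \<ge> 1 \<Longrightarrow> Xs i \<in> borel_measurable M"
    and "\<And>i. i \<ge> 1 \<Longrightarrow> Ys i \<in> borel_measurable M"
    and "indep_vars (\<lambda>_. borel) (\<lambda>i \<omega>. (Xs i \<omega>, Ys i \<omega>)) {1..}"
    and "\<And>i. i \<ge> 1 \<Longrightarrow> distr M borel (\<lambda>\<omega>. (Xs i \<omega>, Ys i \<omega>)) = distr M borel (\<lambda>\<omega>. (X \<omega>, Y \<omega>))"
    and unbounded: "AE \<omega> in M. (SUP n\<in>{1..}. ereal (\<Sum>i=1..n. Xs i \<omega>)) = \<infinity>"
    and "0 < c"
  shows "1 \<le> (\<integral>\<^sup>+\<omega>. ennreal (exp (c * X \<omega>)) \<partial>M)"
proof (rule ccontr)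
  define S where "S n \<omega> = (\<Sum>i=1..n. Xs i \<omega>)" for n \<omega>
  have [measurable]: "S n \<in> borel_measurable M" for n
    unfolding S_def using Xs by (intro borel_measurable_sum) auto
  assume "\<not> 1 \<le> (\<integral>\<^sup>+\<omega>. ennreal (exp (c * X \<omega>)) \<partial>M)"
  then obtain \<rho> where \<rho>: "(\<integral>\<^sup>+\<omega>. ennreal (exp (c * X \<omega>)) \<partial>M) = ennreal \<rho>" "0 \<le> \<rho>" "\<rho> < 1"
    by (cases "\<integral>\<^sup>+\<omega>. ennreal (exp (c * X \<omega>)) \<partial>M") auto
  \<comment> \<open>The level a is chosen so that the Chernoff bounds for the partial sums add up to \<rho>.\<close>
  define a where "a = - ln (1 - \<rho>) / c"
  have "exp (- c * a) = 1 - \<rho>" using \<rho> \<open>0 < c\<close> by (simp add: a_def)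
  have tail: "emeasure M {\<omega>\<in>space M. a \<le> S n \<omega>} \<le> ennreal ((1 - \<rho>) * \<rho> ^ n)" for n
  proof -
    have "emeasure M {\<omega>\<in>space M. a \<le> S n \<omega>}
        \<le> ennreal (exp (- c * a)) * (\<integral>\<^sup>+\<omega>. ennreal (exp (c * S n \<omega>)) * indicator (space M) \<omega> \<partial>M)"
      using \<open>0 < c\<close> by (intro Chernoff_ineq_nn_integral_ge) auto
    also have "(\<integral>\<^sup>+\<omega>. ennreal (exp (c * S n \<omega>)) * indicator (space M) \<omega> \<partial>M) = ennreal \<rho> ^ n"
      using nn_integral_exp_partial_sum[OF assms(1-6), of c n] \<rho>(1)
      by (auto simp: S_def intro!: nn_integral_cong)
    finally show ?thesis
      using \<open>exp (- c * a) = 1 - \<rho>\<close> \<rho> by (simp add: ennreal_mult ennreal_power)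
  qed
  define U where "U = (\<Union>n. {\<omega>\<in>space M. a \<le> S (Suc n) \<omega>})"
  have [measurable]: "U \<in> sets M" unfolding U_def by measurable
  have "AE \<omega> in M. \<omega> \<in> U" using unbounded AE_space
  proof eventually_elim
    case (elim \<omega>)
    then have "ereal a < (SUP n\<in>{1..}. ereal (S n \<omega>))" by (simp add: S_def)
    then obtain n where "n \<ge> 1" "a < S n \<omega>" by (auto simp: less_SUP_iff)
    then have "a \<le> S (Suc (n - 1)) \<omega>" by simp
    then show "\<omega> \<in> U" using elim by (auto simp: U_def)
  qed
  then have "1 = emeasure M U" using emeasure_eq_1_AE[of U] by simp
  also have "\<dots> \<le> (\<Sum>n. emeasure M {\<omega>\<in>space M. a \<le> S (Suc n) \<omega>})"
    unfolding U_def by (rule emeasure_subadditive_countably) auto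
  also have "\<dots> \<le> (\<Sum>n. ennreal ((1 - \<rho>) * \<rho> ^ Suc n))"
    by (intro suminf_le tail summableI)
  also have "\<dots> = ennreal \<rho>"
  proof (rule suminf_ennreal_eq)
    have "(\<lambda>n. ((1 - \<rho>) * \<rho>) * \<rho> ^ n) sums (((1 - \<rho>) * \<rho>) * (1 / (1 - \<rho>)))"
      using \<rho> by (intro sums_mult geometric_sums) auto
    then show "(\<lambda>n. (1 - \<rho>) * \<rho> ^ Suc n) sums \<rho>" using \<rho> by (simp add: ac_simps)
  qed (use \<rho> in auto)
  finally show False using \<rho> by simp
qed

lemma zero_mem_Dset_zero: "0 \<in> Dset M X Y 0"
  by (simp add: Dset_def mgfXY_def emeasure_space_1)

lemma Dset_zero_nonneg:
  fixes Xs Ys :: "nat \<Rightarrow> 'a \<Rightarrow> real"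
  assumes "X \<in> borel_measurable M" "Y \<in> borel_measurable M"
    and "\<And>i. i \<ge> 1 \<Longrightarrow> Xs i \<in> borel_measurable M"
    and "\<And>i. i \<ge> 1 \<Longrightarrow> Ys i \<in> borel_measurable M"
    and "indep_vars (\<lambda>_. borel) (\<lambda>i \<omega>. (Xs i \<omega>, Ys i \<omega>)) {1..}"
    and "\<And>i. i \<ge> 1 \<Longrightarrow> distr M borel (\<lambda>\<omega>. (Xs i \<omega>, Ys i \<omega>)) = distr M borel (\<lambda>\<omega>. (X \<omega>, Y \<omega>))"
    and "AE \<omega> in M. (SUP n\<in>{1..}. ereal (\<Sum>i=1..n. Xs i \<omega>)) = \<infinity>"
    and nondeg: "emeasure M {\<omega>\<in>space M. X \<omega> \<noteq> 0} \<noteq> 0"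
    and s: "s \<in> Dset M X Y 0"
  shows "0 \<le> s"
proof (rule ccontr)
  assume "\<not> 0 \<le> s"
  have le_1: "enn2real (mgfXY M X Y 0 r) \<le> 1" if "r \<in> Dset M X Y 0" for r
    using that enn2real_mono[of "mgfXY M X Y 0 r" 1] by (simp add: Dset_def)
  have "enn2real (mgfXY M X Y 0 ((1 - 1/2) * s + 1/2 * 0))
      < (1 - 1/2) * enn2real (mgfXY M X Y 0 s) + 1/2 * enn2real (mgfXY M X Y 0 0)"
    using strictly_convex_on_mgfXY[OF assms(1,2) nondeg, of 0, unfolded strictly_convex_on_def,
        rule_format, OF s zero_mem_Dset_zero, of "1/2"] \<open>\<not> 0 \<le> s\<close> by simp
  also have "\<dots> \<le> 1" using le_1[OF s] le_1[OF zero_mem_Dset_zero] by simp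
  finally have "enn2real (mgfXY M X Y 0 (s / 2)) < 1" by simp
  moreover have "s / 2 \<in> Dset M X Y 0"
    using convexD[OF convex_graph_section[OF convex_graph_Dset[OF assms(1,2)]] s zero_mem_Dset_zero,
        of "1/2" "1/2"] by simp
  then have "mgfXY M X Y 0 (s / 2) < top"
    by (simp add: Dset_def order.strict_trans1)
  ultimately have "mgfXY M X Y 0 (s / 2) < 1" by simp
  moreover have "mgfXY M X Y 0 (s / 2) = (\<integral>\<^sup>+\<omega>. ennreal (exp ((- s / 2) * X \<omega>)) \<partial>M)"
    by (simp add: mgfXY_def)
  ultimately show False
    using one_le_exp_moment_of_unbounded_partial_sums[OF assms(1-7), of "- s / 2"] \<open>\<not> 0 \<le> s\<close>
    by simp
qed

lemma hfun_zero:
  fixes Xs Ys :: "nat \<Rightarrow> 'a \<Rightarrow> real"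
  assumes "X \<in> borel_measurable M" "Y \<in> borel_measurable M"
    and "\<And>i. i \<ge> 1 \<Longrightarrow> Xs i \<in> borel_measurable M"
    and "\<And>i. i \<ge> 1 \<Longrightarrow> Ys i \<in> borel_measurable M"
    and "indep_vars (\<lambda>_. borel) (\<lambda>i \<omega>. (Xs i \<omega>, Ys i \<omega>)) {1..}"
    and "\<And>i. i \<ge> 1 \<Longrightarrow> distr M borel (\<lambda>\<omega>. (Xs i \<omega>, Ys i \<omega>)) = distr M borel (\<lambda>\<omega>. (X \<omega>, Y \<omega>))"
    and "AE \<omega> in M. (SUP n\<in>{1..}. ereal (\<Sum>i=1..n. Xs i \<omega>)) = \<infinity>"
    and "emeasure M {\<omega>\<in>space M. X \<omega> \<noteq> 0} \<noteq> 0"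
  shows "hfun M X Y 0 = 0"
proof -
  have nonneg: "0 \<le> s" if "s \<in> Dset M X Y 0" for s
    using Dset_zero_nonneg[OF assms that] .
  then have "Inf (Dset M X Y 0) = 0"
    using zero_mem_Dset_zero by (intro cInf_eq_minimum)
  moreover have "bdd_below (Dset M X Y 0)" using nonneg by (rule bdd_belowI)
  ultimately show ?thesis
    using hfun_eq_Inf[of M X Y 0] zero_mem_Dset_zero by (auto simp: zero_ereal_def)
qed

end

theorem lemma6p1:
  fixes M :: "'a measure" and X Y :: "'a \<Rightarrow> real" and Xs Ys :: "nat \<Rightarrow> 'a \<Rightarrow> real"
  assumes "prob_space M"
    and "X \<in> borel_measurable M" and "Y \<in> borel_measurable M"
    and "\<And>i. i \<ge> 1 \<Longrightarrow> Xs i \<in> borel_measurable M"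
    and "\<And>i. i \<ge> 1 \<Longrightarrow> Ys i \<in> borel_measurable M"
    and "prob_space.indep_vars M (\<lambda>_. borel) (\<lambda>i \<omega>. (Xs i \<omega>, Ys i \<omega>)) {1..}"
    and "\<And>i. i \<ge> 1 \<Longrightarrow> distr M borel (\<lambda>\<omega>. (Xs i \<omega>, Ys i \<omega>)) = distr M borel (\<lambda>\<omega>. (X \<omega>, Y \<omega>))"
    and "\<not> (\<exists>c. AE \<omega> in M. X \<omega> = c)" and "\<not> (\<exists>c. AE \<omega> in M. Y \<omega> = c)"
    and "AE \<omega> in M. (SUP n\<in>{1..}. ereal (\<Sum>i=1..n. Xs i \<omega>)) = \<infinity>"
  defines "D \<equiv> Dset M X Y" and "h \<equiv> hfun M X Y"
  defines "A \<equiv> {t. h t < \<infinity>}"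
  shows
    "((\<forall>t. D t \<noteq> {} \<longrightarrow> strictly_convex_on (D t) (\<lambda>s. enn2real (mgfXY M X Y t s))) \<and>
     (\<forall>t1 t2 u. 0 < u \<and> u < 1 \<longrightarrow>
        {(1 - u) * a + u * b | a b. a \<in> D t1 \<and> b \<in> D t2} \<subseteq> D ((1 - u) * t1 + u * t2))) \<and>
    (\<forall>t. is_interval (D t) \<and> closed (D t) \<and> h t > - \<infinity> \<and>
         (h t < \<infinity> \<longrightarrow> (\<exists>s\<in>D t. h t = ereal s))) \<and>
    (convex_on A (\<lambda>t. real_of_ereal (h t)) \<and> h 0 = 0) \<and>
    (is_interval A \<and> 0 \<in> A \<and>
     ((\<exists>t\<in>A. interior (D t) \<noteq> {}) \<longrightarrow> (\<forall>s\<in>interior A. interior (D s) \<noteq> {})))"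
proof -
  interpret prob_space M by fact
  have nondeg: "emeasure M {\<omega>\<in>space M. X \<omega> \<noteq> 0} \<noteq> 0"
    by (rule emeasure_nonzero_of_nonconstant[OF assms(2,8)])
  have graph: "convex_graph D"
    unfolding D_def by (rule convex_graph_Dset[OF assms(2,3)])
  have bdd: "bdd_below (D t)" for t
    unfolding D_def
    by (rule bdd_below_Dset[OF assms(2,3) emeasure_pos_of_unbounded_partial_sums[OF assms(2-5,7,10)]])
  have closed: "closed (D t)" for t
    unfolding D_def by (rule closed_Dset[OF assms(2,3)])
  have h_Inf: "h t = ereal (Inf (D t))" if "D t \<noteq> {}" for t
    using hfun_eq_Inf[of M X Y t] bdd that by (simp add: h_def D_def)
  have h_top: "h t = \<infinity>" if "D t = {}" for t
    using hfun_eq_top[of M X Y t] that by (simp add: h_def D_def)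
  have A_eq: "A = {t. D t \<noteq> {}}"
    unfolding A_def using h_Inf h_top by force
  have h_0: "h 0 = 0"
    unfolding h_def by (rule hfun_zero[OF assms(2-7,10) nondeg])
  show ?thesis
  proof (intro conjI allI impI)
    show "strictly_convex_on (D t) (\<lambda>s. enn2real (mgfXY M X Y t s))" for t
      unfolding D_def by (rule strictly_convex_on_mgfXY[OF assms(2,3) nondeg])
    show "{(1 - u) * a + u * b | a b. a \<in> D t1 \<and> b \<in> D t2} \<subseteq> D ((1 - u) * t1 + u * t2)"
      if "0 < u \<and> u < 1" for t1 t2 u
      using that by (auto intro: convex_graphD[OF graph])
    show "is_interval (D t)" for t
      using convex_graph_section[OF graph] by (simp add: is_interval_convex_1)
    show "closed (D t)" for t by (rule closed)
    show "- \<infinity> < h t" for t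
      using h_Inf h_top by (cases "D t = {}") auto
    show "\<exists>s\<in>D t. h t = ereal s" if "h t < \<infinity>" for t
      using that h_Inf h_top closed_contains_Inf[OF _ bdd closed] by force
    have "real_of_ereal (h t) = Inf (D t)" if "D t \<noteq> {}" for t
      using h_Inf[OF that] by simp
    then show "convex_on A (\<lambda>t. real_of_ereal (h t))"
      unfolding A_eq by (rule convex_graph_Inf[OF graph bdd closed])
    show "h 0 = 0" by (rule h_0)
    show "is_interval A"
      unfolding A_eq by (simp add: is_interval_convex_1 convex_graph_domain[OF graph])
    show "0 \<in> A" unfolding A_def using h_0 by simp
    show "\<forall>s\<in>interior A. interior (D s) \<noteq> {}" if "\<exists>t\<in>A. interior (D t) \<noteq> {}"
      using that convex_graph_interior_nonempty[OF graph] unfolding A_eq by blast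
  qed
qed

end
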